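(* Let $K$ be a number field, $C/K$ a smooth projective absolutely irreducible curve of genus $\ge2$ with Jacobian $J$, and $P_0\in C(K)$. Let $L_0\subseteq J(K)$ be a subgroup of finite index $n=[J(K):L_0]$. Let $\upsilon_1,\dots,\upsilon_s$ be places of $K$ such that each $\upsilon=\upsilon_i$ is of good reduction for $C$ and $\gcd(n,\#J(k_\upsilon))=1$; write $k_i=k_{\upsilon_i}$. Define subgroups $L_0\supseteq L_1\supseteq\dots\supseteq L_s$ and finite subsets $W_0,\dots,W_s\subset L_0$ inductively: $W_0=\{0\}$; for $0\le i\le s-1$, $L_{i+1}$ is the kernel of the composition $L_i\hookrightarrow J(K)\xrightarrow{\mathrm{red}}J(k_{i+1})$; choose a complete set $\mathcal{Q}$ of coset representatives of $L_i/L_{i+1}$, put $W'_{i+1}=\{w+q: w\in W_i,\ q\in\mathcal{Q}\}$ and $W_{i+1}=\{w\in W'_{i+1}:\mathrm{red}(w)\in\jmath(C(k_{i+1}))\}$. Then for every $i\in\{0,\dots,s\}$ and every $Q\in C(K)$ there is $w\in W_i$ with $n(\jmath(Q)-w)\in L_i$.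
   Context: $k_\upsilon$ denotes the residue field of $K$ at $\upsilon$. For a place $\upsilon$ of good reduction, $\mathrm{red}$ denotes the natural reduction maps $C(K)\to C(k_\upsilon)$ and $J(K)\to J(k_\upsilon)$ (where $C$, $J$ over $k_\upsilon$ mean the reductions). $\jmath$ denotes the Abel–Jacobi map $C(K)\to J(K)$, $P\mapsto[P-P_0]$, and also the Abel–Jacobi map $C(k_\upsilon)\to J(k_\upsilon)$, $P\mapsto[P-\tilde P_0]$, with base point the reduction $\tilde P_0$ of $P_0$. *)

theory Defs
  imports "HOL-Algebra.Algebra"
begin

(* J(K) is modelled as a commutative group JK (HOL-Algebra,
   written multiplicatively: the paper's "+" is \<otimes>, "0" is \<one>, "n x" is x [^] n).
   The residue-field Jacobians J(k_i) are the groups Jk i, the reduction maps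
   J(K) \<rightarrow> J(k_i) are redJ i, C(K) is the set CK, C(k_i) is Ck i, the reduction
   maps on points are redC i, and the Abel--Jacobi maps are jK and jk i. *)

definition coset_reps :: "('a, 'b) monoid_scheme \<Rightarrow> 'a set \<Rightarrow> 'a set \<Rightarrow> 'a set \<Rightarrow> bool" where
  "coset_reps G H H' Q \<longleftrightarrow> Q \<subseteq> H \<and> (\<forall>x\<in>H. \<exists>!q. q \<in> Q \<and> x \<in> H' #>\<^bsub>G\<^esub> q)"

fun Lseq :: "(nat \<Rightarrow> ('c, 'd) monoid_scheme) \<Rightarrow> (nat \<Rightarrow> 'a \<Rightarrow> 'c) \<Rightarrow> 'a set \<Rightarrow> nat \<Rightarrow> 'a set" where
  "Lseq Jk redJ L0 0 = L0"
| "Lseq Jk redJ L0 (Suc i) = {x \<in> Lseq Jk redJ L0 i. redJ (Suc i) x = \<one>\<^bsub>Jk (Suc i)\<^esub>}"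

fun Wseq :: "('a, 'b) monoid_scheme \<Rightarrow> (nat \<Rightarrow> ('c, 'd) monoid_scheme) \<Rightarrow> (nat \<Rightarrow> 'a \<Rightarrow> 'c)
    \<Rightarrow> (nat \<Rightarrow> 'e \<Rightarrow> 'c) \<Rightarrow> (nat \<Rightarrow> 'e set) \<Rightarrow> (nat \<Rightarrow> 'a set) \<Rightarrow> nat \<Rightarrow> 'a set" where
  "Wseq JK Jk redJ jk Ck Qs 0 = {\<one>\<^bsub>JK\<^esub>}"
| "Wseq JK Jk redJ jk Ck Qs (Suc i) =
     {w. w \<in> {a \<otimes>\<^bsub>JK\<^esub> q | a q. a \<in> Wseq JK Jk redJ jk Ck Qs i \<and> q \<in> Qs i}
         \<and> redJ (Suc i) w \<in> jk (Suc i) ` Ck (Suc i)}"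

end

theory Submission
  imports Defs "HOL-Number_Theory.Cong"
begin

(* The proof is an induction on i resting on two group-theoretic facts:
   (1) if L_0 has finite index n in J(K), then n x \<in> L_0 for every x, which gives the case i = 0;
   (2) multiplication by n is invertible on a finite group whose order is coprime to n:
       every g equals a(n g) for some a.
   For the step i \<rightarrow> i+1, let x = j(Q) - w with n x \<in> L_i.  By (2) the element y = a(n x)
   of L_i reduces to red(x); if q is the chosen representative of y modulo L_{i+1}, then
   red(q) = red(x), so n(x - q) \<in> L_{i+1}, and red(w + q) = red(j(Q)) = j(red Q) lies in
   j(C(k_{i+1})), i.e. w + q \<in> W_{i+1}. *)

lemma subgroup_nat_pow_closed:
  assumes "subgroup H G" "x \<in> H"
  shows "x [^]\<^bsub>G\<^esub> (k::nat) \<in> H"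
  by (induction k) (simp_all add: subgroup.one_closed[OF assms(1)] subgroup.m_closed[OF assms(1)] assms(2))

text \<open>If a normal subgroup has finite index n, then the n-th power of every element lies in it:
  the quotient group has order n, so every coset raised to the n-th power is trivial.\<close>
lemma (in normal) pow_index_mem:
  assumes "finite (rcosets H)" and x: "x \<in> carrier G"
  shows "x [^] card (rcosets H) \<in> H"
proof -
  interpret Q: group "G Mod H" by (rule factorgroup_is_group)
  have "order (G Mod H) = card (rcosets H)"
    by (simp add: order_def FactGroup_def)
  then have "(H #> x) [^]\<^bsub>G Mod H\<^esub> card (rcosets H) = H"
    using Q.pow_order_eq_1[of "H #> x"] x by (simp add: carrier_FactGroup)
  then have "H #> (x [^] card (rcosets H)) = H"
    using FactGroup_pow[OF x] by simp
  then show ?thesis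
    using rcos_self[OF _ subgroup_axioms, of "x [^] card (rcosets H)"] x by simp
qed

text \<open>In a finite group whose order is coprime to n, raising to the n-th power can be undone:
  with n a \<equiv> 1 modulo the group order, g = (g^n)^a.\<close>
lemma (in group) pow_coprime_order_root:
  assumes "finite (carrier G)" "coprime n (order G)" and g: "g \<in> carrier G"
  obtains a :: nat where "(g [^] n) [^] a = g"
proof -
  obtain a where "[n * a = 1] (mod order G)"
    using cong_solve_coprime_nat[OF assms(2)] by auto
  then have "[n * a = 1] (mod ord g)"
    using ord_dvd_group_order[OF g] cong_dvd_modulus_nat by blast
  then have "int (ord g) dvd 1 - int (n * a)"
    by (metis cong_int_iff cong_iff_dvd_diff cong_sym of_nat_1)
  then have "g [^] int (n * a) = g [^] (1::int)"
    using int_pow_eq[OF g] by simp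
  then have "(g [^] n) [^] a = g"
    using g by (metis int_pow_int int_pow_1 nat_pow_pow)
  then show thesis by (rule that)
qed

lemma refine_approximation:
  assumes G: "comm_group G" and f: "group_hom G H f"
    and H_fin: "finite (carrier H)" and H_coprime: "coprime n (order H)"
    and L: "subgroup L G" and Q: "coset_reps G L {y \<in> L. f y = \<one>\<^bsub>H\<^esub>} Q"
    and z: "z \<in> carrier G" and w: "w \<in> carrier G"
    and zw: "(z \<otimes>\<^bsub>G\<^esub> inv\<^bsub>G\<^esub> w) [^]\<^bsub>G\<^esub> n \<in> L"
  shows "\<exists>q \<in> Q. f (w \<otimes>\<^bsub>G\<^esub> q) = f z
           \<and> (z \<otimes>\<^bsub>G\<^esub> inv\<^bsub>G\<^esub> (w \<otimes>\<^bsub>G\<^esub> q)) [^]\<^bsub>G\<^esub> n \<in> {y \<in> L. f y = \<one>\<^bsub>H\<^esub>}"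
proof -
  interpret G: comm_group G by (rule G)
  interpret f: group_hom G H f by (rule f)
  define x where "x = z \<otimes>\<^bsub>G\<^esub> inv\<^bsub>G\<^esub> w"
  have x: "x \<in> carrier G" using z w by (simp add: x_def)
  obtain a :: nat where a: "(f x [^]\<^bsub>H\<^esub> n) [^]\<^bsub>H\<^esub> a = f x"
    using f.H.pow_coprime_order_root[OF H_fin H_coprime f.hom_closed[OF x]] by blast
  define y where "y = (x [^]\<^bsub>G\<^esub> n) [^]\<^bsub>G\<^esub> a"
  have y: "y \<in> L" using zw subgroup_nat_pow_closed[OF L] by (simp add: y_def x_def)
  have fy: "f y = f x" using a x by (simp add: y_def f.hom_nat_pow)
  obtain q where q: "q \<in> Q" and yq: "y \<in> {y \<in> L. f y = \<one>\<^bsub>H\<^esub>} #>\<^bsub>G\<^esub> q"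
    using Q y by (auto simp: coset_reps_def)
  have qL: "q \<in> L" using Q q by (auto simp: coset_reps_def)
  have qc: "q \<in> carrier G" using qL subgroup.subset[OF L] by auto
  have fq: "f q = f x"
  proof -
    obtain l where "l \<in> L" "f l = \<one>\<^bsub>H\<^esub>" "y = l \<otimes>\<^bsub>G\<^esub> q"
      using yq by (auto simp: r_coset_def)
    then show ?thesis using fy qc subgroup.subset[OF L] by auto
  qed
  have xq_L: "(x \<otimes>\<^bsub>G\<^esub> inv\<^bsub>G\<^esub> q) [^]\<^bsub>G\<^esub> n \<in> L"
  proof -
    have "(x \<otimes>\<^bsub>G\<^esub> inv\<^bsub>G\<^esub> q) [^]\<^bsub>G\<^esub> n
          = x [^]\<^bsub>G\<^esub> n \<otimes>\<^bsub>G\<^esub> inv\<^bsub>G\<^esub> (q [^]\<^bsub>G\<^esub> n)"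
      using x qc by (simp add: G.nat_pow_distrib G.nat_pow_inv)
    then show ?thesis
      using zw qL subgroup_nat_pow_closed[OF L] subgroup.m_closed[OF L] subgroup.m_inv_closed[OF L]
      by (simp add: x_def)
  qed
  have xq_ker: "f ((x \<otimes>\<^bsub>G\<^esub> inv\<^bsub>G\<^esub> q) [^]\<^bsub>G\<^esub> n) = \<one>\<^bsub>H\<^esub>"
    using x qc fq by (simp add: f.hom_nat_pow f.hom_inv)
  have "z \<otimes>\<^bsub>G\<^esub> inv\<^bsub>G\<^esub> (w \<otimes>\<^bsub>G\<^esub> q) = x \<otimes>\<^bsub>G\<^esub> inv\<^bsub>G\<^esub> q"
    using z w qc by (simp add: x_def G.inv_mult G.m_ac)
  moreover have "f (w \<otimes>\<^bsub>G\<^esub> q) = f z"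
  proof -
    have "z = w \<otimes>\<^bsub>G\<^esub> x" using z w by (metis G.m_lcomm G.inv_closed G.r_inv G.r_one x_def)
    then show ?thesis using x w qc fq by simp
  qed
  ultimately show ?thesis using q xq_L xq_ker by auto
qed

lemma Lseq_subgroup:
  assumes G: "group G" and L0: "subgroup L0 G"
    and hom: "\<And>i. i \<in> {1..s} \<Longrightarrow> group_hom G (Jk i) (redJ i)"
    and "i \<le> s"
  shows "subgroup (Lseq Jk redJ L0 i) G"
  using \<open>i \<le> s\<close>
proof (induction i)
  case 0
  then show ?case using L0 by simp
next
  case (Suc i)
  then have "subgroup (Lseq Jk redJ L0 i) G" by simp
  moreover have "Lseq Jk redJ L0 (Suc i)
      = Lseq Jk redJ L0 i \<inter> kernel G (Jk (Suc i)) (redJ (Suc i))"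
    using subgroup.subset[OF calculation] by (auto simp: kernel_def)
  ultimately show ?case
    using group.subgroups_Inter_pair[OF G] group_hom.subgroup_kernel[OF hom] Suc.prems by simp
qed

lemma Wseq_carrier:
  assumes G: "monoid G" and Qs: "\<And>i. i < s \<Longrightarrow> Qs i \<subseteq> carrier G" and "i \<le> s"
  shows "Wseq G Jk redJ jk Ck Qs i \<subseteq> carrier G"
  using \<open>i \<le> s\<close>
proof (induction i)
  case 0
  then show ?case using monoid.one_closed[OF G] by simp
next
  case (Suc i)
  then show ?case using Qs[of i] monoid.m_closed[OF G] by auto
qed

theorem lemma5p1:
  fixes JK :: "('a, 'b) monoid_scheme"
    and Jk :: "nat \<Rightarrow> ('c, 'd) monoid_scheme"
    and redJ :: "nat \<Rightarrow> 'a \<Rightarrow> 'c"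
    and CK :: "'p set" and Ck :: "nat \<Rightarrow> 'e set"
    and redC :: "nat \<Rightarrow> 'p \<Rightarrow> 'e"
    and jK :: "'p \<Rightarrow> 'a" and jk :: "nat \<Rightarrow> 'e \<Rightarrow> 'c"
    and P0 :: 'p and L0 :: "'a set" and n s :: nat
    and Qs :: "nat \<Rightarrow> 'a set"
  assumes JK_grp: "comm_group JK"
    and P0: "P0 \<in> CK"
    and jK_carrier: "jK ` CK \<subseteq> carrier JK"
    and jK_base: "jK P0 = \<one>\<^bsub>JK\<^esub>"
    and L0_sub: "subgroup L0 JK"
    and L0_index: "finite (rcosets\<^bsub>JK\<^esub> L0)" "n = card (rcosets\<^bsub>JK\<^esub> L0)"
    and Jk_grp: "\<And>i. i \<in> {1..s} \<Longrightarrow> comm_group (Jk i)"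
    and Jk_fin: "\<And>i. i \<in> {1..s} \<Longrightarrow> finite (carrier (Jk i))"
    and Jk_coprime: "\<And>i. i \<in> {1..s} \<Longrightarrow> coprime n (card (carrier (Jk i)))"
    and redJ_hom: "\<And>i. i \<in> {1..s} \<Longrightarrow> redJ i \<in> hom JK (Jk i)"
    and redC_into: "\<And>i. i \<in> {1..s} \<Longrightarrow> redC i ` CK \<subseteq> Ck i"
    and jk_carrier: "\<And>i. i \<in> {1..s} \<Longrightarrow> jk i ` Ck i \<subseteq> carrier (Jk i)"
    and jk_base: "\<And>i. i \<in> {1..s} \<Longrightarrow> jk i (redC i P0) = \<one>\<^bsub>Jk i\<^esub>"
    and red_compat: "\<And>i P. i \<in> {1..s} \<Longrightarrow> P \<in> CK \<Longrightarrow> redJ i (jK P) = jk i (redC i P)"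
    and Qs_reps: "\<And>i. i < s \<Longrightarrow>
        coset_reps JK (Lseq Jk redJ L0 i) (Lseq Jk redJ L0 (Suc i)) (Qs i)"
  shows "\<forall>i \<le> s. \<forall>Q \<in> CK. \<exists>w \<in> Wseq JK Jk redJ jk Ck Qs i.
           (jK Q \<otimes>\<^bsub>JK\<^esub> inv\<^bsub>JK\<^esub> w) [^]\<^bsub>JK\<^esub> n \<in> Lseq Jk redJ L0 i"
proof -
  interpret G: comm_group JK by (rule JK_grp)
  let ?L = "Lseq Jk redJ L0" and ?W = "Wseq JK Jk redJ jk Ck Qs"
  have hom: "group_hom JK (Jk i) (redJ i)" if "i \<in> {1..s}" for i
    using that Jk_grp redJ_hom comm_group.axioms(2) group_hom.intro group_hom_axioms.intro
    by (metis G.is_group)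
  have L_sub: "subgroup (?L i) JK" if "i \<le> s" for i
    using Lseq_subgroup[OF G.is_group L0_sub hom that] by simp
  have W_car: "?W i \<subseteq> carrier JK" if "i \<le> s" for i
    using Wseq_carrier[OF G.is_monoid _ that] Qs_reps L_sub subgroup.subset
    by (metis (no_types, lifting) coset_reps_def less_imp_le order.trans)
  have "\<forall>Q \<in> CK. \<exists>w \<in> ?W i. (jK Q \<otimes>\<^bsub>JK\<^esub> inv\<^bsub>JK\<^esub> w) [^]\<^bsub>JK\<^esub> n \<in> ?L i"
    if "i \<le> s" for i
    using that
  proof (induction i)
    case 0
    show ?case
      using normal.pow_index_mem[OF G.subgroup_imp_normal[OF L0_sub] L0_index(1)] jK_carrier L0_index(2)
      by auto
  next
    case (Suc i)
    then have i: "Suc i \<in> {1..s}" "i < s" by auto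
    show ?case
    proof
      fix Q assume Q: "Q \<in> CK"
      obtain w where w: "w \<in> ?W i" "(jK Q \<otimes>\<^bsub>JK\<^esub> inv\<^bsub>JK\<^esub> w) [^]\<^bsub>JK\<^esub> n \<in> ?L i"
        using Suc Q by auto
      obtain q where q: "q \<in> Qs i" "redJ (Suc i) (w \<otimes>\<^bsub>JK\<^esub> q) = redJ (Suc i) (jK Q)"
          "(jK Q \<otimes>\<^bsub>JK\<^esub> inv\<^bsub>JK\<^esub> (w \<otimes>\<^bsub>JK\<^esub> q)) [^]\<^bsub>JK\<^esub> n \<in> ?L (Suc i)"
        using refine_approximation[OF JK_grp hom[OF i(1)] Jk_fin[OF i(1)] _ L_sub[of i]
            Qs_reps[OF i(2), simplified] _ _ w(2)]
          Jk_coprime[OF i(1)] i Q jK_carrier W_car[of i] w(1)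
        by (auto simp: order_def)
      have "redJ (Suc i) (w \<otimes>\<^bsub>JK\<^esub> q) \<in> jk (Suc i) ` Ck (Suc i)"
        using q(2) red_compat[OF i(1) Q] redC_into[OF i(1)] Q by auto
      then show "\<exists>w \<in> ?W (Suc i). (jK Q \<otimes>\<^bsub>JK\<^esub> inv\<^bsub>JK\<^esub> w) [^]\<^bsub>JK\<^esub> n \<in> ?L (Suc i)"
        using w(1) q(1,3) by auto
    qed
  qed
  then show ?thesis by blast
qed

end
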